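(* Let $k\ge 3$. A graph $G$ is $k$-chromatic and double-edge-critical if and only if $G$ is the complete graph $K_k$.
   Context: All graphs are finite and simple. A graph $G$ is (vertex-)critical if $\chi(G-v)<\chi(G)$ for every vertex $v$. A vertex-critical graph $G$ is double-edge-critical if $\chi(G-e_1-e_2)\le\chi(G)-2$ for any two non-incident edges $e_1,e_2\in E(G)$. *)

theory Defs
  imports Main
begin

definition simple_graph :: "'a set \<Rightarrow> 'a set set \<Rightarrow> bool" where
  "simple_graph V E \<longleftrightarrow> finite V \<and>
     (\<forall>e\<in>E. \<exists>u v. e = {u, v} \<and> u \<noteq> v \<and> u \<in> V \<and> v \<in> V)"

definition colorable :: "'a set \<Rightarrow> 'a set set \<Rightarrow> nat \<Rightarrow> bool" where
  "colorable V E n \<longleftrightarrow> (\<exists>f. (\<forall>v\<in>V. f v < n) \<and> (\<forall>u v. {u, v} \<in> E \<longrightarrow> u \<noteq> v \<longrightarrow> f u \<noteq> f v))"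

definition chromatic_number :: "'a set \<Rightarrow> 'a set set \<Rightarrow> nat" where
  "chromatic_number V E = (LEAST n. colorable V E n)"

definition del_vertex_edges :: "'a set set \<Rightarrow> 'a \<Rightarrow> 'a set set" where
  "del_vertex_edges E v = {e \<in> E. v \<notin> e}"

definition vertex_critical :: "'a set \<Rightarrow> 'a set set \<Rightarrow> bool" where
  "vertex_critical V E \<longleftrightarrow>
     (\<forall>v\<in>V. chromatic_number (V - {v}) (del_vertex_edges E v) < chromatic_number V E)"

definition double_edge_critical :: "'a set \<Rightarrow> 'a set set \<Rightarrow> bool" where
  "double_edge_critical V E \<longleftrightarrow> vertex_critical V E \<and>
     (\<forall>e1\<in>E. \<forall>e2\<in>E. e1 \<inter> e2 = {} \<longrightarrow>
        int (chromatic_number V (E - {e1, e2})) \<le> int (chromatic_number V E) - 2)"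

definition complete_graph :: "'a set \<Rightarrow> 'a set set \<Rightarrow> bool" where
  "complete_graph V E \<longleftrightarrow> E = {{u, v} | u v. u \<in> V \<and> v \<in> V \<and> u \<noteq> v}"

end

theory Submission
  imports Defs
begin

text \<open>
  A vertex-critical graph \<open>G\<close> has minimum degree at least \<open>\<chi>(G) - 1\<close>: otherwise an optimal
  colouring of \<open>G - v\<close> extends to \<open>v\<close>. So for \<open>\<chi>(G) \<ge> 3\<close> every vertex has two distinct
  neighbours, and two non-adjacent vertices \<open>a \<noteq> b\<close> would carry disjoint edges \<open>ax\<close>, \<open>by\<close>.
  If \<open>G\<close> is double-edge-critical, \<open>G - ax - by\<close> has a \<open>(\<chi>(G) - 2)\<close>-colouring, and giving
  \<open>a\<close> and \<open>b\<close> a common new colour turns it into a \<open>(\<chi>(G) - 1)\<close>-colouring of \<open>G\<close>, which is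
  absurd. Hence \<open>G\<close> is complete. Conversely, in \<open>K\<^sub>k\<close> minus disjoint edges \<open>ax\<close>, \<open>by\<close> the
  vertices \<open>x\<close> and \<open>y\<close> may reuse the colours of \<open>a\<close> and \<open>b\<close>.
\<close>

lemma chromatic_number_le: "colorable V E n \<Longrightarrow> chromatic_number V E \<le> n"
  by (simp add: chromatic_number_def Least_le)

lemma colorable_mono: "colorable V E m \<Longrightarrow> m \<le> n \<Longrightarrow> colorable V E n"
  unfolding colorable_def by (meson order_less_le_trans)

lemma simple_graph_Union_edges: "simple_graph V E \<Longrightarrow> \<Union>E \<subseteq> V"
  unfolding simple_graph_def by fastforce

lemma simple_graph_finite: "simple_graph V E \<Longrightarrow> finite V"
  by (simp add: simple_graph_def)

lemma simple_graph_edge_neq: "simple_graph V E \<Longrightarrow> {u, w} \<in> E \<Longrightarrow> u \<noteq> w"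
  unfolding simple_graph_def by (metis doubleton_eq_iff insert_absorb2)

lemma simple_graph_finite_neighbours:
  assumes "simple_graph V E"
  shows "finite {w. {v, w} \<in> E}"
proof (rule finite_subset)
  show "{w. {v, w} \<in> E} \<subseteq> V"
    using simple_graph_Union_edges[OF assms] by blast
qed (rule simple_graph_finite[OF assms])

lemma simple_graph_Diff: "simple_graph V E \<Longrightarrow> simple_graph V (E - F)"
  by (simp add: simple_graph_def)

lemma simple_graph_del_vertex:
  "simple_graph V E \<Longrightarrow> simple_graph (V - {v}) (del_vertex_edges E v)"
  unfolding simple_graph_def del_vertex_edges_def by fastforce

lemma colorable_via_map:
  assumes "finite W" "card W \<le> n" "\<Union>E \<subseteq> V" "\<And>v. v \<in> V \<Longrightarrow> r v \<in> W"
    and "\<And>u w. {u, w} \<in> E \<Longrightarrow> u \<noteq> w \<Longrightarrow> r u \<noteq> r w"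
  shows "colorable V E n"
proof -
  obtain h where h: "bij_betw h W {0..<card W}"
    using ex_bij_betw_finite_nat[OF assms(1)] by blast
  show ?thesis
    unfolding colorable_def
  proof (intro exI[of _ "h \<circ> r"] conjI allI impI ballI)
    fix v assume "v \<in> V"
    then have "h (r v) \<in> {0..<card W}"
      using assms(4) bij_betw_apply[OF h] by blast
    then show "(h \<circ> r) v < n"
      using assms(2) by simp
  next
    fix u w assume uw: "{u, w} \<in> E" "u \<noteq> w"
    then have "r u \<in> W" "r w \<in> W"
      using assms(3,4) by blast+
    then show "(h \<circ> r) u \<noteq> (h \<circ> r) w"
      using assms(5)[OF uw] bij_betw_imp_inj_on[OF h] by (simp add: inj_on_eq_iff)
  qed
qed

lemma colorable_card: "simple_graph V E \<Longrightarrow> colorable V E (card V)"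
  by (rule colorable_via_map[where r = id])
    (auto simp: simple_graph_finite simple_graph_Union_edges)

lemma colorable_chromatic_number:
  "simple_graph V E \<Longrightarrow> colorable V E (chromatic_number V E)"
  unfolding chromatic_number_def by (rule LeastI, erule colorable_card)

lemma colorable_insert_vertex:
  assumes col: "colorable (V - {v}) (del_vertex_edges E v) n"
    and fin: "finite {w. {v, w} \<in> E}" and deg: "card {w. {v, w} \<in> E} < n"
  shows "colorable V E n"
proof -
  obtain f where f: "\<forall>u\<in>V - {v}. f u < n"
    "\<forall>u w. {u, w} \<in> del_vertex_edges E v \<longrightarrow> u \<noteq> w \<longrightarrow> f u \<noteq> f w"
    using col unfolding colorable_def by blast
  let ?N = "{w. {v, w} \<in> E}"
  have "card (f ` ?N) < card {0..<n}"
    using card_image_le[OF fin, of f] deg by simp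
  then have "\<not> {0..<n} \<subseteq> f ` ?N"
    using card_mono[OF finite_imageI[OF fin]] leD by blast
  then obtain c where c: "c < n" "c \<notin> f ` ?N"
    by (metis atLeastLessThan_iff subsetI zero_le)
  show ?thesis
    unfolding colorable_def
  proof (intro exI[of _ "f(v := c)"] conjI allI impI ballI)
    fix u assume "u \<in> V"
    then show "(f(v := c)) u < n"
      using f(1) c(1) by auto
  next
    fix u w assume uw: "{u, w} \<in> E" "u \<noteq> w"
    show "(f(v := c)) u \<noteq> (f(v := c)) w"
    proof (cases "v \<in> {u, w}")
      case True
      then have "{v, u} \<in> E \<and> w = v \<or> {v, w} \<in> E \<and> u = v"
        using uw(1) by (auto simp: insert_commute)
      then show ?thesis
        using uw(2) c(2) by auto
    next
      case False
      then show ?thesis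
        using uw f(2) by (auto simp: del_vertex_edges_def)
    qed
  qed
qed

lemma vertex_critical_degree:
  assumes G: "simple_graph V E" and crit: "vertex_critical V E" and v: "v \<in> V"
  shows "chromatic_number V E - 1 \<le> card {w. {v, w} \<in> E}"
proof (rule ccontr)
  assume low: "\<not> ?thesis"
  let ?G' = "del_vertex_edges E v"
  have "chromatic_number (V - {v}) ?G' < chromatic_number V E"
    using crit v unfolding vertex_critical_def by simp
  then have "colorable (V - {v}) ?G' (chromatic_number V E - 1)"
    by (intro colorable_mono[OF colorable_chromatic_number[OF simple_graph_del_vertex[OF G]]])
      simp
  moreover have "card {w. {v, w} \<in> E} < chromatic_number V E - 1"
    using low by simp
  ultimately have "colorable V E (chromatic_number V E - 1)"
    by (rule colorable_insert_vertex[OF _ simple_graph_finite_neighbours[OF G]])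
  from chromatic_number_le[OF this] low show False
    by linarith
qed

lemma colorable_Suc_Diff_edges_at_nonadjacent:
  assumes G: "simple_graph V E" and col: "colorable V (E - {{a, x}, {b, y}}) n"
    and nonadj: "{a, b} \<notin> E"
  shows "colorable V E (Suc n)"
proof -
  obtain c where c: "\<forall>u\<in>V. c u < n"
    "\<forall>u w. {u, w} \<in> E - {{a, x}, {b, y}} \<longrightarrow> u \<noteq> w \<longrightarrow> c u \<noteq> c w"
    using col unfolding colorable_def by blast
  show ?thesis
    unfolding colorable_def
  proof (intro exI[of _ "c(a := n, b := n)"] conjI allI impI ballI)
    fix u assume "u \<in> V"
    then show "(c(a := n, b := n)) u < Suc n"
      using c(1) by (simp add: less_Suc_eq)
  next
    fix u w assume uw: "{u, w} \<in> E" "u \<noteq> w"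
    then have in_V: "u \<in> V" "w \<in> V"
      using simple_graph_Union_edges[OF G] by blast+
    have new_colour: "(c(a := n, b := n)) v = n \<longleftrightarrow> v \<in> {a, b}" if "v \<in> V" for v
      using c(1) that by auto
    show "(c(a := n, b := n)) u \<noteq> (c(a := n, b := n)) w"
    proof
      assume same: "(c(a := n, b := n)) u = (c(a := n, b := n)) w"
      then have "u \<in> {a, b} \<longleftrightarrow> w \<in> {a, b}"
        using new_colour[OF in_V(1)] new_colour[OF in_V(2)] by simp
      moreover have "\<not> (u \<in> {a, b} \<and> w \<in> {a, b})"
      proof
        assume "u \<in> {a, b} \<and> w \<in> {a, b}"
        with uw(2) have "{u, w} = {a, b}"
          by auto
        with uw(1) nonadj show False
          by simp
      qed
      ultimately have outside: "u \<notin> {a, b}" "w \<notin> {a, b}"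
        by blast+
      then have "c u = c w"
        using same by simp
      moreover have "a \<notin> {u, w}" "b \<notin> {u, w}"
        using outside by auto
      then have "{u, w} \<noteq> {a, x}" "{u, w} \<noteq> {b, y}"
        by auto
      ultimately show False
        using uw c(2) by blast
    qed
  qed
qed

lemma vertex_critical_other_neighbour:
  assumes G: "simple_graph V E" and crit: "vertex_critical V E"
    and chi: "3 \<le> chromatic_number V E" and v: "v \<in> V"
  obtains w where "{v, w} \<in> E" "w \<noteq> x"
proof -
  have "\<not> {w. {v, w} \<in> E} \<subseteq> {x}"
  proof
    assume "{w. {v, w} \<in> E} \<subseteq> {x}"
    then have "card {w. {v, w} \<in> E} \<le> card {x}"
      by (rule card_mono[rotated]) simp
    with vertex_critical_degree[OF G crit v] chi show False
      by simp
  qed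
  then show ?thesis
    using that by blast
qed

lemma double_edge_critical_imp_complete_graph:
  assumes G: "simple_graph V E" and crit: "double_edge_critical V E"
    and chi: "3 \<le> chromatic_number V E"
  shows "complete_graph V E"
proof -
  have adjacent: "{a, b} \<in> E" if ab: "a \<in> V" "b \<in> V" "a \<noteq> b" for a b
  proof (rule ccontr)
    assume nonadj: "{a, b} \<notin> E"
    have vc: "vertex_critical V E"
      using crit unfolding double_edge_critical_def by blast
    obtain x where x: "{a, x} \<in> E" "x \<noteq> b"
      using vertex_critical_other_neighbour[OF G vc chi ab(1)] .
    obtain y where y: "{b, y} \<in> E" "y \<noteq> x"
      using vertex_critical_other_neighbour[OF G vc chi ab(2)] .
    have "a \<noteq> x" "b \<noteq> y"
      using simple_graph_edge_neq[OF G] x(1) y(1) by blast+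
    moreover have "y \<noteq> a"
      using nonadj y(1) by (auto simp: insert_commute)
    ultimately have disjoint: "{a, x} \<inter> {b, y} = {}"
      using ab(3) x(2) y(2) by auto
    let ?E' = "E - {{a, x}, {b, y}}"
    have "int (chromatic_number V ?E') \<le> int (chromatic_number V E) - 2"
      using crit x(1) y(1) disjoint unfolding double_edge_critical_def by blast
    then have "chromatic_number V ?E' \<le> chromatic_number V E - 2"
      by linarith
    then have "colorable V ?E' (chromatic_number V E - 2)"
      by (rule colorable_mono[OF colorable_chromatic_number[OF simple_graph_Diff[OF G]]])
    then have "colorable V E (Suc (chromatic_number V E - 2))"
      by (rule colorable_Suc_Diff_edges_at_nonadjacent[OF G _ nonadj])
    from chromatic_number_le[OF this] chi show False
      by linarith
  qed
  show ?thesis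
    unfolding complete_graph_def
  proof
    show "E \<subseteq> {{u, v} |u v. u \<in> V \<and> v \<in> V \<and> u \<noteq> v}"
      using G unfolding simple_graph_def by blast
    show "{{u, v} |u v. u \<in> V \<and> v \<in> V \<and> u \<noteq> v} \<subseteq> E"
      using adjacent by blast
  qed
qed

lemma complete_graph_edge_iff:
  "complete_graph V E \<Longrightarrow> u \<noteq> w \<Longrightarrow> {u, w} \<in> E \<longleftrightarrow> u \<in> V \<and> w \<in> V"
  unfolding complete_graph_def by (auto simp: doubleton_eq_iff)

lemma complete_graph_simple_graph: "finite V \<Longrightarrow> complete_graph V E \<Longrightarrow> simple_graph V E"
  unfolding complete_graph_def simple_graph_def by auto

lemma complete_graph_del_vertex:
  "complete_graph V E \<Longrightarrow> complete_graph (V - {v}) (del_vertex_edges E v)"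
  unfolding complete_graph_def del_vertex_edges_def by auto

lemma chromatic_number_complete_graph:
  assumes fin: "finite V" and K: "complete_graph V E"
  shows "chromatic_number V E = card V"
proof (rule antisym)
  have G: "simple_graph V E"
    using complete_graph_simple_graph[OF fin K] .
  show "chromatic_number V E \<le> card V"
    using chromatic_number_le[OF colorable_card[OF G]] .
  obtain f where f: "\<forall>v\<in>V. f v < chromatic_number V E"
    "\<forall>u w. {u, w} \<in> E \<longrightarrow> u \<noteq> w \<longrightarrow> f u \<noteq> f w"
    using colorable_chromatic_number[OF G] unfolding colorable_def by blast
  have "inj_on f V"
    using f(2) complete_graph_edge_iff[OF K] by (meson inj_onI)
  then have "card V = card (f ` V)"
    by (simp add: card_image)
  also have "\<dots> \<le> card {0..<chromatic_number V E}"
    using f(1) by (intro card_mono) auto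
  finally show "card V \<le> chromatic_number V E"
    by simp
qed

lemma vertex_critical_complete_graph:
  assumes fin: "finite V" and K: "complete_graph V E"
  shows "vertex_critical V E"
  unfolding vertex_critical_def
proof
  fix v assume "v \<in> V"
  then have "card (V - {v}) < card V"
    using fin by (rule card_Diff1_less[rotated])
  then show "chromatic_number (V - {v}) (del_vertex_edges E v) < chromatic_number V E"
    using fin K complete_graph_del_vertex[OF K] by (simp add: chromatic_number_complete_graph)
qed

lemma colorable_complete_graph_Diff_disjoint_edges:
  assumes fin: "finite V" and K: "complete_graph V E"
    and e: "{a, x} \<in> E" "{b, y} \<in> E" "{a, x} \<inter> {b, y} = {}"
  shows "colorable V (E - {{a, x}, {b, y}}) (card V - 2)"
proof -
  have G: "simple_graph V E"
    using complete_graph_simple_graph[OF fin K] .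
  have loopless: "a \<noteq> x" "b \<noteq> y"
    using simple_graph_edge_neq[OF G] e(1,2) by blast+
  then have in_V: "a \<in> V" "x \<in> V" "b \<in> V" "y \<in> V"
    using complete_graph_edge_iff[OF K] e(1,2) by blast+
  have distinct: "a \<noteq> b" "a \<noteq> y" "x \<noteq> b" "x \<noteq> y"
    using e(3) by auto
  define r where "r z = (if z = x then a else if z = y then b else z)" for z
  show ?thesis
  proof (rule colorable_via_map[where W = "V - {x, y}" and r = r])
    show "finite (V - {x, y})"
      using fin by simp
    have "card {x, y} = 2"
      using distinct(4) by simp
    then show "card (V - {x, y}) \<le> card V - 2"
      using fin in_V by (simp add: card_Diff_subset)
    show "\<Union>(E - {{a, x}, {b, y}}) \<subseteq> V"
      using simple_graph_Union_edges[OF G] by blast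
    show "r v \<in> V - {x, y}" if "v \<in> V" for v
      using that in_V distinct loopless by (simp add: r_def)
  next
    fix u w assume uw: "{u, w} \<in> E - {{a, x}, {b, y}}" "u \<noteq> w"
    have "{u, w} = {a, x} \<or> {u, w} = {b, y}" if "r u = r w"
      using that uw(2) distinct loopless by (auto simp: r_def split: if_splits)
    then show "r u \<noteq> r w"
      using uw(1) by blast
  qed
qed

lemma double_edge_critical_complete_graph:
  assumes fin: "finite V" and K: "complete_graph V E"
  shows "double_edge_critical V E"
  unfolding double_edge_critical_def
proof (intro conjI ballI impI)
  show "vertex_critical V E"
    using vertex_critical_complete_graph[OF fin K] .
  fix e1 e2 assume e: "e1 \<in> E" "e2 \<in> E" "e1 \<inter> e2 = {}"
  obtain a x b y where edges: "e1 = {a, x}" "e2 = {b, y}" "x \<in> V" "y \<in> V" "x \<noteq> y"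
    using e K unfolding complete_graph_def by blast
  have "card {x, y} \<le> card V"
    using fin edges(3,4) by (intro card_mono) auto
  then have "2 \<le> card V"
    using edges(5) by simp
  moreover have "chromatic_number V (E - {e1, e2}) \<le> card V - 2"
    using colorable_complete_graph_Diff_disjoint_edges[OF fin K] e edges(1,2)
    by (metis chromatic_number_le)
  ultimately show "int (chromatic_number V (E - {e1, e2})) \<le> int (chromatic_number V E) - 2"
    using chromatic_number_complete_graph[OF fin K] by linarith
qed

theorem theorem33:
  fixes V :: "'a set" and E :: "'a set set" and k :: nat
  assumes "k \<ge> 3" and "simple_graph V E"
  shows "(chromatic_number V E = k \<and> double_edge_critical V E) \<longleftrightarrow>
         (complete_graph V E \<and> card V = k)"
proof -
  have fin: "finite V"
    using simple_graph_finite[OF assms(2)] .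
  show ?thesis
  proof
    assume "chromatic_number V E = k \<and> double_edge_critical V E"
    moreover from this have "complete_graph V E"
      using double_edge_critical_imp_complete_graph[OF assms(2)] assms(1) by simp
    ultimately show "complete_graph V E \<and> card V = k"
      using chromatic_number_complete_graph[OF fin] by simp
  next
    assume "complete_graph V E \<and> card V = k"
    then show "chromatic_number V E = k \<and> double_edge_critical V E"
      using chromatic_number_complete_graph[OF fin] double_edge_critical_complete_graph[OF fin]
      by simp
  qed
qed

end
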